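(* Let $n$ be odd and let $g_0,g_1,g_2,g_3:\mathbb{V}_n\to\mathbb{F}_2$ be semi-bent functions with $g_0\oplus g_1\oplus g_2\oplus g_3=0$. Then $g_0g_1\oplus g_0g_2\oplus g_1g_2$ is semi-bent if and only if for every $u\in\mathbb{V}_n$: $\mathcal{W}_{g_i}(u)=0$ for an even number of indices $i\in\{0,1,2,3\}$, and if $\mathcal{W}_{g_i}(u)\neq0$ for all $i\in\{0,1,2,3\}$, then either $\mathcal{W}_{g_0}(u)\mathcal{W}_{g_1}(u)=\mathcal{W}_{g_2}(u)\mathcal{W}_{g_3}(u)$, or the number of $i$ with $\mathcal{W}_{g_i}(u)=2^{(n+1)/2}$ is $1$ or $3$ but it is not the case that $\mathcal{W}_{g_0}(u)=\mathcal{W}_{g_1}(u)=\mathcal{W}_{g_2}(u)$.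
   Context: $\mathbb{V}_n$ is an $n$-dimensional $\mathbb{F}_2$-vector space with inner product $u\cdot x$; $\mathcal{W}_g(u)=\sum_{x\in\mathbb{V}_n}(-1)^{g(x)\oplus u\cdot x}$. For odd $n$, $g$ is semi-bent if $\mathcal{W}_g(u)\in\{0,\pm2^{\frac{n+1}{2}}\}$ for all $u$. *)

theory Defs
  imports Main
begin

text \<open>V_n is modelled as the set of boolean lists of length n (F_2 = bool, addition = xor).\<close>
definition vecs :: "nat \<Rightarrow> bool list set" where
  "vecs n = {xs. length xs = n}"

definition bxor :: "bool \<Rightarrow> bool \<Rightarrow> bool" where
  "bxor a b = (a \<noteq> b)"

definition dotp :: "bool list \<Rightarrow> bool list \<Rightarrow> bool" where
  "dotp u x = foldr bxor (map2 (\<and>) u x) False"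

definition walsh :: "nat \<Rightarrow> (bool list \<Rightarrow> bool) \<Rightarrow> bool list \<Rightarrow> int" where
  "walsh n g u = (\<Sum>x\<in>vecs n. (-1) ^ (if bxor (g x) (dotp u x) then 1 else 0))"

definition semi_bent :: "nat \<Rightarrow> (bool list \<Rightarrow> bool) \<Rightarrow> bool" where
  "semi_bent n g \<longleftrightarrow>
     (\<forall>u\<in>vecs n. walsh n g u \<in> {0, 2 ^ ((n + 1) div 2), - (2 ^ ((n + 1) div 2))})"

end

theory Submission
  imports Defs
begin

text \<open>The majority function f of g0, g1, g2 satisfies
  2 (-1)^f = (-1)^g0 + (-1)^g1 + (-1)^g2 - (-1)^(g0 + g1 + g2), and g0 + g1 + g2 = g3 by hypothesis,
  so 2 W_f(u) = W_g0(u) + W_g1(u) + W_g2(u) - W_g3(u). With all four W_gi(u) in {0, M, -M},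
  M = 2^((n+1)/2), semi-bentness of f at u means that this combination lies in {0, 2M, -2M},
  and a case distinction over the 81 possible value patterns yields the stated criterion.\<close>

lemma card_less_4_eq:
  "card {i. i < (4::nat) \<and> P i} = of_bool (P 0) + of_bool (P 1) + of_bool (P 2) + of_bool (P 3)"
proof -
  have "{i. i < (4::nat) \<and> P i} =
      (if P 0 then {0} else {}) \<union> (if P 1 then {1} else {}) \<union>
      (if P 2 then {2} else {}) \<union> (if P 3 then {3} else {})"
    by (rule set_eqI) (auto simp: less_Suc_eq numeral_eq_Suc split: if_splits; metis gr0I)
  then show ?thesis
    by (cases "P 0"; cases "P 1"; cases "P 2"; cases "P 3") simp_all
qed

lemma all_less_4_iff: "(\<forall>i<(4::nat). P i) \<longleftrightarrow> P 0 \<and> P 1 \<and> P 2 \<and> P 3"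
  by (auto simp: less_Suc_eq numeral_eq_Suc)

lemma walsh_cong:
  assumes "\<And>x. x \<in> vecs n \<Longrightarrow> f x = g x"
  shows "walsh n f u = walsh n g u"
  unfolding walsh_def using assms by (intro sum.cong) auto

lemma two_sign_majority:
  fixes a b c d :: bool
  defines "s \<equiv> \<lambda>p. (-1::int) ^ (if p then 1 else 0)"
  shows "2 * s (bxor (bxor (bxor (a \<and> b) (a \<and> c)) (b \<and> c)) d)
    = s (bxor a d) + s (bxor b d) + s (bxor c d) - s (bxor (bxor (bxor a b) c) d)"
  unfolding s_def bxor_def by (cases a; cases b; cases c; cases d) auto

lemma walsh_majority:
  "2 * walsh n (\<lambda>x. bxor (bxor (g0 x \<and> g1 x) (g0 x \<and> g2 x)) (g1 x \<and> g2 x)) u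
    = walsh n g0 u + walsh n g1 u + walsh n g2 u
      - walsh n (\<lambda>x. bxor (bxor (g0 x) (g1 x)) (g2 x)) u"
  unfolding walsh_def sum_distrib_left
  by (simp add: two_sign_majority sum.distrib sum_subtractf)

lemma sum3_minus_in_double_levels_iff:
  fixes w0 w1 w2 w3 M :: int
  assumes M: "M > 0"
    and "w0 \<in> {0, M, -M}" "w1 \<in> {0, M, -M}" "w2 \<in> {0, M, -M}" "w3 \<in> {0, M, -M}"
  shows "w0 + w1 + w2 - w3 \<in> {0, 2 * M, -(2 * M)} \<longleftrightarrow>
     even (of_bool (w0 = 0) + of_bool (w1 = 0) + of_bool (w2 = 0) + (of_bool (w3 = 0) :: nat)) \<and>
     (w0 \<noteq> 0 \<and> w1 \<noteq> 0 \<and> w2 \<noteq> 0 \<and> w3 \<noteq> 0 \<longrightarrow>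
        w0 * w1 = w2 * w3 \<or>
        (of_bool (w0 = M) + of_bool (w1 = M) + of_bool (w2 = M) + (of_bool (w3 = M) :: nat)) \<in> {1, 3}
          \<and> \<not> (w0 = w1 \<and> w1 = w2))"
  using assms(2-5)
  by (elim insertE emptyE; simp add: M M[THEN less_imp_neq] M[THEN less_imp_neq, symmetric])

theorem proposition4:
  fixes n :: nat and g :: "nat \<Rightarrow> bool list \<Rightarrow> bool"
  assumes "odd n"
    and "\<And>i. i < 4 \<Longrightarrow> semi_bent n (g i)"
    and "\<forall>x\<in>vecs n. bxor (bxor (bxor (g 0 x) (g 1 x)) (g 2 x)) (g 3 x) = False"
  shows "semi_bent n (\<lambda>x. bxor (bxor (g 0 x \<and> g 1 x) (g 0 x \<and> g 2 x)) (g 1 x \<and> g 2 x))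
    \<longleftrightarrow> (\<forall>u\<in>vecs n.
          even (card {i. i < 4 \<and> walsh n (g i) u = 0}) \<and>
          ((\<forall>i<4. walsh n (g i) u \<noteq> 0) \<longrightarrow>
             (walsh n (g 0) u * walsh n (g 1) u = walsh n (g 2) u * walsh n (g 3) u \<or>
              (card {i. i < 4 \<and> walsh n (g i) u = 2 ^ ((n + 1) div 2)} \<in> {1, 3} \<and>
               \<not> (walsh n (g 0) u = walsh n (g 1) u \<and> walsh n (g 1) u = walsh n (g 2) u)))))"
proof -
  define M :: int where "M = 2 ^ ((n + 1) div 2)"
  let ?f = "\<lambda>x. bxor (bxor (g 0 x \<and> g 1 x) (g 0 x \<and> g 2 x)) (g 1 x \<and> g 2 x)"
  have levels: "walsh n (g i) u \<in> {0, M, -M}" if "i < 4" "u \<in> vecs n" for i u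
    using assms(2)[OF that(1)] that(2) unfolding semi_bent_def M_def by blast
  have g3: "walsh n (\<lambda>x. bxor (bxor (g 0 x) (g 1 x)) (g 2 x)) u = walsh n (g 3) u" for u
    using assms(3) by (intro walsh_cong) (auto simp: bxor_def)
  have "walsh n ?f u \<in> {0, M, -M} \<longleftrightarrow>
      walsh n (g 0) u + walsh n (g 1) u + walsh n (g 2) u - walsh n (g 3) u \<in> {0, 2 * M, -(2 * M)}"
    for u
  proof -
    have "walsh n ?f u \<in> {0, M, -M} \<longleftrightarrow> 2 * walsh n ?f u \<in> {0, 2 * M, -(2 * M)}"
      by auto
    then show ?thesis
      by (simp only: walsh_majority g3)
  qed
  moreover have "M > 0"
    unfolding M_def by simp
  ultimately show ?thesis
    unfolding semi_bent_def M_def[symmetric] card_less_4_eq all_less_4_iff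
    using sum3_minus_in_double_levels_iff levels by (simp cong: ball_cong)
qed

end
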